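(* Let $R$ be a commutative ring with identity. Then $R$ is almost complemented if and only if its classical ring of quotients $q(R)$ is almost complemented.
   Context: $\mathfrak{N}(R)$ is the nilradical, $\mathrm{reg}(R)$ the set of regular elements (non-zero-divisors), and $q(R)$ the localization of $R$ at $\mathrm{reg}(R)$. A ring $A$ is complemented if for every $a\in A$ there is $b\in A$ with $ab=0$ and $a+b\in\mathrm{reg}(A)$. $R$ is almost complemented if $R/\mathfrak{N}(R)$ is complemented. *)

theory Defs
  imports "HOL-Algebra.QuotRing"
begin

text \<open>Nilradical, regular elements (non-zero-divisors), complemented and
almost complemented rings, and the classical ring of quotients q(R), i.e. the
localization of R at reg(R), constructed as fractions a/s (s regular) modulo
the relation a/s = b/t iff a t = b s (valid since reg(R) consists of
non-zero-divisors).\<close>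

definition nilradical :: "('a, 'b) ring_scheme \<Rightarrow> 'a set" where
  "nilradical R = {x \<in> carrier R. \<exists>n::nat. x [^]\<^bsub>R\<^esub> n = \<zero>\<^bsub>R\<^esub>}"

definition reg :: "('a, 'b) ring_scheme \<Rightarrow> 'a set" where
  "reg R = {x \<in> carrier R. \<forall>y \<in> carrier R. x \<otimes>\<^bsub>R\<^esub> y = \<zero>\<^bsub>R\<^esub> \<longrightarrow> y = \<zero>\<^bsub>R\<^esub>}"

definition complemented :: "('a, 'b) ring_scheme \<Rightarrow> bool" where
  "complemented A \<longleftrightarrow> (\<forall>a \<in> carrier A. \<exists>b \<in> carrier A.
      a \<otimes>\<^bsub>A\<^esub> b = \<zero>\<^bsub>A\<^esub> \<and> a \<oplus>\<^bsub>A\<^esub> b \<in> reg A)"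

definition almost_complemented :: "('a, 'b) ring_scheme \<Rightarrow> bool" where
  "almost_complemented R \<longleftrightarrow> complemented (R Quot nilradical R)"

definition qrel :: "('a, 'b) ring_scheme \<Rightarrow> (('a \<times> 'a) \<times> ('a \<times> 'a)) set" where
  "qrel R = {((a, s), (b, t)). a \<in> carrier R \<and> s \<in> reg R \<and> b \<in> carrier R \<and> t \<in> reg R
              \<and> a \<otimes>\<^bsub>R\<^esub> t = b \<otimes>\<^bsub>R\<^esub> s}"

definition qclass :: "('a, 'b) ring_scheme \<Rightarrow> 'a \<Rightarrow> 'a \<Rightarrow> ('a \<times> 'a) set" where
  "qclass R a s = qrel R `` {(a, s)}"

definition qmult :: "('a, 'b) ring_scheme \<Rightarrow> ('a \<times> 'a) set \<Rightarrow> ('a \<times> 'a) set \<Rightarrow> ('a \<times> 'a) set" where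
  "qmult R U V = {z. \<exists>a s b t. (a, s) \<in> U \<and> (b, t) \<in> V \<and> z \<in> qclass R (a \<otimes>\<^bsub>R\<^esub> b) (s \<otimes>\<^bsub>R\<^esub> t)}"

definition qadd :: "('a, 'b) ring_scheme \<Rightarrow> ('a \<times> 'a) set \<Rightarrow> ('a \<times> 'a) set \<Rightarrow> ('a \<times> 'a) set" where
  "qadd R U V = {z. \<exists>a s b t. (a, s) \<in> U \<and> (b, t) \<in> V \<and> z \<in> qclass R ((a \<otimes>\<^bsub>R\<^esub> t) \<oplus>\<^bsub>R\<^esub> (b \<otimes>\<^bsub>R\<^esub> s)) (s \<otimes>\<^bsub>R\<^esub> t)}"

definition q :: "('a, 'b) ring_scheme \<Rightarrow> (('a \<times> 'a) set) ring" where
  "q R = \<lparr> carrier = (carrier R \<times> reg R) // qrel R,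
      mult = qmult R,
      one = qclass R \<one>\<^bsub>R\<^esub> \<one>\<^bsub>R\<^esub>,
      zero = qclass R \<zero>\<^bsub>R\<^esub> \<one>\<^bsub>R\<^esub>,
      add = qadd R \<rparr>"

end

theory Submission
  imports Defs
begin

text \<open>Write N for the nilradical. The quotient R/N is complemented iff every a has a b with
  a b \<in> N such that a + b is a non-zero-divisor modulo N, i.e. (a + b) y \<in> N forces y \<in> N.
  A fraction a/s of q(R) is nilpotent iff a is, and multiplying by a regular s neither creates
  nor destroys nilpotency (s x \<in> N implies x \<in> N). Hence if b complements a in R, then b/s
  complements a/s in q(R). Conversely, if c/t complements a/1 in q(R), then c complements a in R:
  from a c \<in> N and (a + c) y \<in> N one gets (a y)(a y) = (a (a + c) y - a c y) y \<in> N, so a y and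
  likewise c y lie in N, whence (a/1 + c/t)(y/1) = (a t + c) y / t is nilpotent and y \<in> N.\<close>

context ideal begin

lemma carrier_FactRing: "carrier (R Quot I) = (+>) I ` carrier R"
  by (auto simp: FactRing_simps)

lemma FactRing_rcos_eq_zero_iff: "x \<in> carrier R \<Longrightarrow> I +> x = \<zero>\<^bsub>R Quot I\<^esub> \<longleftrightarrow> x \<in> I"
  using a_rcos_const rcos_const_imp_mem by (auto simp: FactRing_def)

lemmas FactRing_rcos_ops =
  ring_hom_mult[OF rcos_ring_hom, symmetric] ring_hom_add[OF rcos_ring_hom, symmetric]

lemma FactRing_reg_iff:
  "c \<in> carrier R \<Longrightarrow> I +> c \<in> reg (R Quot I) \<longleftrightarrow> (\<forall>y\<in>carrier R. c \<otimes> y \<in> I \<longrightarrow> y \<in> I)"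
  by (simp add: reg_def carrier_FactRing FactRing_rcos_ops FactRing_rcos_eq_zero_iff)

lemma complemented_FactRing_iff:
  "complemented (R Quot I) \<longleftrightarrow>
    (\<forall>a\<in>carrier R. \<exists>b\<in>carrier R. a \<otimes> b \<in> I \<and> (\<forall>y\<in>carrier R. (a \<oplus> b) \<otimes> y \<in> I \<longrightarrow> y \<in> I))"
  by (simp add: complemented_def carrier_FactRing FactRing_rcos_ops FactRing_rcos_eq_zero_iff
      FactRing_reg_iff)

end

context ring begin

lemma reg_closed: "s \<in> reg R \<Longrightarrow> s \<in> carrier R"
  by (simp add: reg_def)

lemma one_reg: "\<one> \<in> reg R"
  by (simp add: reg_def)

lemma reg_mult_eq_zeroD: "s \<in> reg R \<Longrightarrow> y \<in> carrier R \<Longrightarrow> s \<otimes> y = \<zero> \<Longrightarrow> y = \<zero>"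
  by (simp add: reg_def)

lemma reg_mult:
  assumes s: "s \<in> reg R" and t: "t \<in> reg R"
  shows "s \<otimes> t \<in> reg R"
  unfolding reg_def
proof (intro CollectI conjI ballI impI)
  show "s \<otimes> t \<in> carrier R"
    using s t by (simp add: reg_closed)
  fix y assume y: "y \<in> carrier R" and sty: "s \<otimes> t \<otimes> y = \<zero>"
  have "s \<otimes> (t \<otimes> y) = \<zero>"
    using s t y sty by (simp add: reg_closed m_assoc)
  then have "t \<otimes> y = \<zero>"
    using s t y by (meson reg_mult_eq_zeroD reg_closed m_closed)
  then show "y = \<zero>"
    by (rule reg_mult_eq_zeroD[OF t y])
qed

lemma reg_pow: "s \<in> reg R \<Longrightarrow> s [^] (n::nat) \<in> reg R"
  by (induction n) (simp_all add: one_reg reg_mult)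

lemma reg_mult_cancel:
  assumes s: "s \<in> reg R" and a: "a \<in> carrier R" and b: "b \<in> carrier R"
    and eq: "s \<otimes> a = s \<otimes> b"
  shows "a = b"
proof -
  have "s \<otimes> (a \<ominus> b) = s \<otimes> a \<ominus> s \<otimes> b"
    using s a b by (simp add: reg_closed minus_eq r_distr r_minus)
  also have "\<dots> = \<zero>"
    using eq s b by (simp add: reg_closed minus_eq r_neg)
  finally have diff: "a \<ominus> b = \<zero>"
    using s a b by (meson reg_mult_eq_zeroD minus_closed)
  have "a = (a \<ominus> b) \<oplus> b"
    using a b by (simp add: minus_eq a_assoc l_neg)
  also have "\<dots> = b"
    using diff b by simp
  finally show ?thesis .
qed

end

context cring begin

text \<open>The annihilated factor z makes the induction work without a binomial theorem, which
  HOL-Algebra lacks: (x + y)^(k+1) z = (x + y)^k (x z) + (x + y)^k (y z).\<close>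
lemma nat_pow_add_annihilates:
  fixes m n :: nat
  assumes "x \<in> carrier R" "y \<in> carrier R" "z \<in> carrier R"
    and "x [^] m \<otimes> z = \<zero>" "y [^] n \<otimes> z = \<zero>"
  shows "(x \<oplus> y) [^] (m + n) \<otimes> z = \<zero>"
  using assms(3-)
proof (induction "m + n" arbitrary: m n z)
  case 0
  then show ?case using assms(1,2) by simp
next
  case (Suc k)
  show ?case
  proof (cases "m = 0 \<or> n = 0")
    case True
    then have "z = \<zero>" using Suc.prems assms(1,2) by auto
    then show ?thesis using assms(1,2) by simp
  next
    case False
    then obtain m' n' where mn: "m = Suc m'" "n = Suc n'" by (meson not0_implies_Suc)
    have "(x \<oplus> y) [^] (m' + n) \<otimes> (x \<otimes> z) = \<zero>"
    proof (rule Suc.hyps)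
      show "x [^] m' \<otimes> (x \<otimes> z) = \<zero>"
        using Suc.prems mn assms(1,2) by (simp add: m_assoc)
      show "y [^] n \<otimes> (x \<otimes> z) = \<zero>"
        using Suc.prems assms(1,2) m_lcomm[of "y [^] n" x z] by simp
    qed (use Suc.hyps Suc.prems mn assms in auto)
    moreover have "(x \<oplus> y) [^] (m + n') \<otimes> (y \<otimes> z) = \<zero>"
    proof (rule Suc.hyps)
      show "y [^] n' \<otimes> (y \<otimes> z) = \<zero>"
        using Suc.prems mn assms(1,2) by (simp add: m_assoc)
      show "x [^] m \<otimes> (y \<otimes> z) = \<zero>"
        using Suc.prems assms(1,2) m_lcomm[of "x [^] m" y z] by simp
    qed (use Suc.hyps Suc.prems mn assms in auto)
    moreover have "m' + n = k" "m + n' = k"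
      using Suc.hyps(2) mn by simp_all
    moreover have "(x \<oplus> y) [^] Suc k \<otimes> z
        = (x \<oplus> y) [^] k \<otimes> (x \<otimes> z) \<oplus> (x \<oplus> y) [^] k \<otimes> (y \<otimes> z)"
      using Suc.prems assms(1,2) by (simp add: m_assoc l_distr r_distr)
    ultimately show ?thesis
      using Suc.hyps(2) by simp
  qed
qed

lemma nilradical_ideal: "ideal (nilradical R) R"
proof (rule idealI)
  show "subgroup (nilradical R) (add_monoid R)"
  proof
    show "nilradical R \<subseteq> carrier (add_monoid R)"
      by (auto simp: nilradical_def)
    show "\<one>\<^bsub>add_monoid R\<^esub> \<in> nilradical R"
      by (auto simp: nilradical_def intro: exI[of _ 1])
  next
    fix x y assume "x \<in> nilradical R" "y \<in> nilradical R"
    then obtain m n :: nat where x: "x \<in> carrier R" "x [^] m = \<zero>"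
      and y: "y \<in> carrier R" "y [^] n = \<zero>"
      by (auto simp: nilradical_def)
    have "(x \<oplus> y) [^] (m + n) \<otimes> \<one> = \<zero>"
      using x y by (intro nat_pow_add_annihilates) auto
    then show "x \<otimes>\<^bsub>add_monoid R\<^esub> y \<in> nilradical R"
      using x y by (auto simp: nilradical_def)
    have "(\<ominus> x) [^] m = ((\<ominus> \<one>) \<otimes> x) [^] m"
      using x by (simp add: l_minus)
    also have "\<dots> = (\<ominus> \<one>) [^] m \<otimes> x [^] m"
      using x by (intro nat_pow_distrib) auto
    finally have "(\<ominus> x) [^] m = \<zero>"
      using x by simp
    then show "inv\<^bsub>add_monoid R\<^esub> x \<in> nilradical R"
      using x by (auto simp: nilradical_def a_inv_def[symmetric])
  qed
next
  fix a x assume "a \<in> nilradical R" "x \<in> carrier R"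
  then obtain m :: nat where a: "a \<in> carrier R" "a [^] m = \<zero>" and x: "x \<in> carrier R"
    by (auto simp: nilradical_def)
  then have "(x \<otimes> a) [^] m = \<zero>"
    by (simp add: nat_pow_distrib)
  then show "x \<otimes> a \<in> nilradical R" "a \<otimes> x \<in> nilradical R"
    using a x by (auto simp: nilradical_def m_comm[of a x])
qed (rule ring_axioms)

lemma nilradical_square_imp_mem:
  assumes "z \<in> carrier R" "z \<otimes> z \<in> nilradical R"
  shows "z \<in> nilradical R"
proof -
  obtain n :: nat where "(z \<otimes> z) [^] n = \<zero>"
    using assms(2) by (auto simp: nilradical_def)
  then have "z [^] (n + n) = \<zero>"
    using assms(1) by (simp add: nat_pow_distrib nat_pow_mult[symmetric])
  then show ?thesis
    using assms(1) by (auto simp: nilradical_def)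
qed

lemma nilradical_mult_of_orthogonal_sum:
  assumes a: "a \<in> carrier R" and c: "c \<in> carrier R" and y: "y \<in> carrier R"
    and ac: "a \<otimes> c \<in> nilradical R" and acy: "(a \<oplus> c) \<otimes> y \<in> nilradical R"
  shows "a \<otimes> y \<in> nilradical R"
proof -
  interpret N: ideal "nilradical R" R by (rule nilradical_ideal)
  have "(a \<otimes> y) \<otimes> (a \<otimes> y) = (a \<otimes> ((a \<oplus> c) \<otimes> y) \<ominus> (a \<otimes> c) \<otimes> y) \<otimes> y"
    using a c y by algebra
  also have "\<dots> \<in> nilradical R"
    unfolding minus_eq
    by (intro N.I_r_closed[OF _ y] N.a_closed N.a_inv_closed
        N.I_l_closed[OF acy a] N.I_r_closed[OF ac y])
  finally show ?thesis
    by (rule nilradical_square_imp_mem[OF m_closed[OF a y]])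
qed

lemma almost_complemented_iff:
  "almost_complemented R \<longleftrightarrow> (\<forall>a\<in>carrier R. \<exists>b\<in>carrier R. a \<otimes> b \<in> nilradical R \<and>
    (\<forall>y\<in>carrier R. (a \<oplus> b) \<otimes> y \<in> nilradical R \<longrightarrow> y \<in> nilradical R))"
  unfolding almost_complemented_def by (rule ideal.complemented_FactRing_iff[OF nilradical_ideal])

lemma reg_mult_nilradical_cancel:
  assumes s: "s \<in> reg R" and x: "x \<in> carrier R" and sx: "s \<otimes> x \<in> nilradical R"
  shows "x \<in> nilradical R"
proof -
  obtain n :: nat where "(s \<otimes> x) [^] n = \<zero>"
    using sx by (auto simp: nilradical_def)
  then have "s [^] n \<otimes> x [^] n = \<zero>"
    using s x by (simp add: nat_pow_distrib reg_closed)
  then have "x [^] n = \<zero>"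
    using s x by (meson reg_mult_eq_zeroD reg_pow nat_pow_closed)
  then show ?thesis
    using x by (auto simp: nilradical_def)
qed

lemma equiv_qrel: "equiv (carrier R \<times> reg R) (qrel R)"
proof (rule equivI)
  show "refl_on (carrier R \<times> reg R) (qrel R)"
    by (auto simp: refl_on_def qrel_def)
  show "sym (qrel R)"
    by (auto simp: sym_def qrel_def)
  show "trans (qrel R)"
  proof (rule transI, clarify)
    fix a s b t c u
    assume "((a, s), (b, t)) \<in> qrel R" and "((b, t), (c, u)) \<in> qrel R"
    then have h: "a \<in> carrier R" "s \<in> reg R" "b \<in> carrier R" "t \<in> reg R" "c \<in> carrier R"
      "u \<in> reg R" "a \<otimes> t = b \<otimes> s" "b \<otimes> u = c \<otimes> t"
      by (auto simp: qrel_def)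
    note carr = h(1,3,5) reg_closed[OF h(2)] reg_closed[OF h(4)] reg_closed[OF h(6)]
    have "t \<otimes> (a \<otimes> u) = (a \<otimes> t) \<otimes> u"
      using carr by algebra
    also have "\<dots> = s \<otimes> (b \<otimes> u)"
      using carr by (simp add: h(7)) algebra
    also have "\<dots> = t \<otimes> (c \<otimes> s)"
      using carr by (simp add: h(8)) algebra
    finally have "a \<otimes> u = c \<otimes> s"
      by (rule reg_mult_cancel[OF h(4), rotated 2]) (use carr in simp_all)
    then show "((a, s), (c, u)) \<in> qrel R"
      using h by (simp add: qrel_def)
  qed
qed (auto simp: qrel_def)

lemma qclass_eq_iff:
  assumes "a \<in> carrier R" "s \<in> reg R" "b \<in> carrier R" "t \<in> reg R"
  shows "qclass R a s = qclass R b t \<longleftrightarrow> a \<otimes> t = b \<otimes> s"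
proof -
  have "qclass R a s = qclass R b t \<longleftrightarrow> ((a, s), (b, t)) \<in> qrel R"
    unfolding qclass_def using assms by (intro eq_equiv_class_iff[OF equiv_qrel]) auto
  also have "\<dots> \<longleftrightarrow> a \<otimes> t = b \<otimes> s"
    using assms by (simp add: qrel_def)
  finally show ?thesis .
qed

lemma carrier_q: "carrier (q R) = {qclass R a s | a s. a \<in> carrier R \<and> s \<in> reg R}"
  by (auto simp: q_def quotient_def qclass_def)

lemma qclass_closed: "a \<in> carrier R \<Longrightarrow> s \<in> reg R \<Longrightarrow> qclass R a s \<in> carrier (q R)"
  by (auto simp: carrier_q)

lemma q_cases:
  assumes "X \<in> carrier (q R)"
  obtains a s where "a \<in> carrier R" "s \<in> reg R" "X = qclass R a s"
  using assms by (auto simp: carrier_q)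

lemma mem_qclass_iff:
  "(b, t) \<in> qclass R a s \<longleftrightarrow>
    a \<in> carrier R \<and> s \<in> reg R \<and> b \<in> carrier R \<and> t \<in> reg R \<and> a \<otimes> t = b \<otimes> s"
  by (simp add: qclass_def qrel_def)

lemma qclass_lift2:
  assumes a: "a \<in> carrier R" and s: "s \<in> reg R" and b: "b \<in> carrier R" and t: "t \<in> reg R"
    and compat: "\<And>a' s' b' t'. (a', s') \<in> qclass R a s \<Longrightarrow> (b', t') \<in> qclass R b t \<Longrightarrow>
      qclass R (f a' s' b' t') (g s' t') = qclass R (f a s b t) (g s t)"
  shows "{z. \<exists>a' s' b' t'. (a', s') \<in> qclass R a s \<and> (b', t') \<in> qclass R b t \<and>
      z \<in> qclass R (f a' s' b' t') (g s' t')} = qclass R (f a s b t) (g s t)"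
proof -
  have "(a, s) \<in> qclass R a s" "(b, t) \<in> qclass R b t"
    using a s b t by (simp_all add: mem_qclass_iff reg_closed)
  then show ?thesis
    using compat by blast
qed

lemma qmult_qclass:
  assumes a: "a \<in> carrier R" and s: "s \<in> reg R" and b: "b \<in> carrier R" and t: "t \<in> reg R"
  shows "qmult R (qclass R a s) (qclass R b t) = qclass R (a \<otimes> b) (s \<otimes> t)"
  unfolding qmult_def
proof (rule qclass_lift2[OF assms])
  fix a' s' b' t' assume "(a', s') \<in> qclass R a s" "(b', t') \<in> qclass R b t"
  then have h: "a' \<in> carrier R" "s' \<in> reg R" "a \<otimes> s' = a' \<otimes> s"
    "b' \<in> carrier R" "t' \<in> reg R" "b \<otimes> t' = b' \<otimes> t"
    by (simp_all add: mem_qclass_iff)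
  note carr = a b h(1,4) reg_closed[OF s] reg_closed[OF t] reg_closed[OF h(2)] reg_closed[OF h(5)]
  have "(a' \<otimes> b') \<otimes> (s \<otimes> t) = (a' \<otimes> s) \<otimes> (b' \<otimes> t)"
    using carr by algebra
  also have "\<dots> = (a \<otimes> b) \<otimes> (s' \<otimes> t')"
    using carr by (simp add: h(3,6)[symmetric]) algebra
  finally show "qclass R (a' \<otimes> b') (s' \<otimes> t') = qclass R (a \<otimes> b) (s \<otimes> t)"
    using carr h s t by (simp add: qclass_eq_iff reg_mult)
qed

lemma qadd_qclass:
  assumes a: "a \<in> carrier R" and s: "s \<in> reg R" and b: "b \<in> carrier R" and t: "t \<in> reg R"
  shows "qadd R (qclass R a s) (qclass R b t) = qclass R (a \<otimes> t \<oplus> b \<otimes> s) (s \<otimes> t)"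
  unfolding qadd_def
proof (rule qclass_lift2[OF assms])
  fix a' s' b' t' assume "(a', s') \<in> qclass R a s" "(b', t') \<in> qclass R b t"
  then have h: "a' \<in> carrier R" "s' \<in> reg R" "a \<otimes> s' = a' \<otimes> s"
    "b' \<in> carrier R" "t' \<in> reg R" "b \<otimes> t' = b' \<otimes> t"
    by (simp_all add: mem_qclass_iff)
  note carr = a b h(1,4) reg_closed[OF s] reg_closed[OF t] reg_closed[OF h(2)] reg_closed[OF h(5)]
  have "(a' \<otimes> t' \<oplus> b' \<otimes> s') \<otimes> (s \<otimes> t)
      = (a' \<otimes> s) \<otimes> (t \<otimes> t') \<oplus> (b' \<otimes> t) \<otimes> (s \<otimes> s')"
    using carr by algebra
  also have "\<dots> = (a \<otimes> t \<oplus> b \<otimes> s) \<otimes> (s' \<otimes> t')"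
    using carr by (simp add: h(3,6)[symmetric]) algebra
  finally show "qclass R (a' \<otimes> t' \<oplus> b' \<otimes> s') (s' \<otimes> t') = qclass R (a \<otimes> t \<oplus> b \<otimes> s) (s \<otimes> t)"
    using carr h s t by (simp add: qclass_eq_iff reg_mult)
qed

lemma q_simps:
  "X \<otimes>\<^bsub>q R\<^esub> Y = qmult R X Y" "X \<oplus>\<^bsub>q R\<^esub> Y = qadd R X Y"
  "\<one>\<^bsub>q R\<^esub> = qclass R \<one> \<one>" "\<zero>\<^bsub>q R\<^esub> = qclass R \<zero> \<one>"
  by (simp_all add: q_def)

lemma q_abelian_group: "abelian_group (q R)"
proof (rule abelian_groupI)
  fix X Y assume "X \<in> carrier (q R)" "Y \<in> carrier (q R)"
  then obtain a s b t where
    ab: "a \<in> carrier R" "s \<in> reg R" "b \<in> carrier R" "t \<in> reg R" and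
    XY: "X = qclass R a s" "Y = qclass R b t"
    by (metis q_cases)
  note carr = ab reg_closed[OF ab(2)] reg_closed[OF ab(4)]
  show "X \<oplus>\<^bsub>q R\<^esub> Y \<in> carrier (q R)"
    using carr by (simp add: XY q_simps qadd_qclass qclass_closed reg_mult)
  have "(a \<otimes> t \<oplus> b \<otimes> s) \<otimes> (t \<otimes> s) = (b \<otimes> s \<oplus> a \<otimes> t) \<otimes> (s \<otimes> t)"
    using carr by algebra
  then show "X \<oplus>\<^bsub>q R\<^esub> Y = Y \<oplus>\<^bsub>q R\<^esub> X"
    using carr by (simp add: XY q_simps qadd_qclass qclass_eq_iff reg_mult)
next
  fix X Y Z assume "X \<in> carrier (q R)" "Y \<in> carrier (q R)" "Z \<in> carrier (q R)"
  then obtain a s b t c u where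
    abc: "a \<in> carrier R" "s \<in> reg R" "b \<in> carrier R" "t \<in> reg R" "c \<in> carrier R" "u \<in> reg R"
    and XYZ: "X = qclass R a s" "Y = qclass R b t" "Z = qclass R c u"
    by (metis q_cases)
  note carr = abc reg_closed[OF abc(2)] reg_closed[OF abc(4)] reg_closed[OF abc(6)]
  have "((a \<otimes> t \<oplus> b \<otimes> s) \<otimes> u \<oplus> c \<otimes> (s \<otimes> t)) \<otimes> (s \<otimes> (t \<otimes> u))
      = (a \<otimes> (t \<otimes> u) \<oplus> (b \<otimes> u \<oplus> c \<otimes> t) \<otimes> s) \<otimes> (s \<otimes> t \<otimes> u)"
    using carr by algebra
  then show "X \<oplus>\<^bsub>q R\<^esub> Y \<oplus>\<^bsub>q R\<^esub> Z = X \<oplus>\<^bsub>q R\<^esub> (Y \<oplus>\<^bsub>q R\<^esub> Z)"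
    using carr by (simp add: XYZ q_simps qadd_qclass qclass_eq_iff reg_mult)
next
  show "\<zero>\<^bsub>q R\<^esub> \<in> carrier (q R)"
    by (simp add: q_simps qclass_closed one_reg)
next
  fix X assume "X \<in> carrier (q R)"
  then obtain a s where a: "a \<in> carrier R" "s \<in> reg R" and X: "X = qclass R a s"
    by (metis q_cases)
  note carr = a reg_closed[OF a(2)]
  show "\<zero>\<^bsub>q R\<^esub> \<oplus>\<^bsub>q R\<^esub> X = X"
    using carr by (simp add: X q_simps qadd_qclass qclass_eq_iff one_reg m_comm)
  have "(\<ominus> a \<otimes> s \<oplus> a \<otimes> s) \<otimes> \<one> = \<zero> \<otimes> (s \<otimes> s)"
    using carr by algebra
  then have "qclass R (\<ominus> a) s \<oplus>\<^bsub>q R\<^esub> X = \<zero>\<^bsub>q R\<^esub>"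
    using carr by (simp add: X q_simps qadd_qclass qclass_eq_iff reg_mult one_reg)
  then show "\<exists>Y\<in>carrier (q R). Y \<oplus>\<^bsub>q R\<^esub> X = \<zero>\<^bsub>q R\<^esub>"
    using a by (blast intro: qclass_closed)
qed

lemma q_comm_monoid: "comm_monoid (q R)"
proof (rule comm_monoidI)
  fix X Y assume "X \<in> carrier (q R)" "Y \<in> carrier (q R)"
  then obtain a s b t where
    ab: "a \<in> carrier R" "s \<in> reg R" "b \<in> carrier R" "t \<in> reg R" and
    XY: "X = qclass R a s" "Y = qclass R b t"
    by (metis q_cases)
  note carr = ab reg_closed[OF ab(2)] reg_closed[OF ab(4)]
  show "X \<otimes>\<^bsub>q R\<^esub> Y \<in> carrier (q R)"
    using carr by (simp add: XY q_simps qmult_qclass qclass_closed reg_mult)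
  show "X \<otimes>\<^bsub>q R\<^esub> Y = Y \<otimes>\<^bsub>q R\<^esub> X"
    using carr by (simp add: XY q_simps qmult_qclass m_comm)
next
  fix X Y Z assume "X \<in> carrier (q R)" "Y \<in> carrier (q R)" "Z \<in> carrier (q R)"
  then obtain a s b t c u where
    abc: "a \<in> carrier R" "s \<in> reg R" "b \<in> carrier R" "t \<in> reg R" "c \<in> carrier R" "u \<in> reg R"
    and XYZ: "X = qclass R a s" "Y = qclass R b t" "Z = qclass R c u"
    by (metis q_cases)
  note carr = abc reg_closed[OF abc(2)] reg_closed[OF abc(4)] reg_closed[OF abc(6)]
  show "X \<otimes>\<^bsub>q R\<^esub> Y \<otimes>\<^bsub>q R\<^esub> Z = X \<otimes>\<^bsub>q R\<^esub> (Y \<otimes>\<^bsub>q R\<^esub> Z)"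
    using carr by (simp add: XYZ q_simps qmult_qclass reg_mult m_assoc)
next
  show "\<one>\<^bsub>q R\<^esub> \<in> carrier (q R)"
    by (simp add: q_simps qclass_closed one_reg)
next
  fix X assume "X \<in> carrier (q R)"
  then obtain a s where a: "a \<in> carrier R" "s \<in> reg R" and X: "X = qclass R a s"
    by (metis q_cases)
  show "\<one>\<^bsub>q R\<^esub> \<otimes>\<^bsub>q R\<^esub> X = X"
    using a reg_closed[OF a(2)] by (simp add: X q_simps qmult_qclass one_reg)
qed

lemma q_cring: "cring (q R)"
proof (rule cringI[OF q_abelian_group q_comm_monoid])
  fix X Y Z assume "X \<in> carrier (q R)" "Y \<in> carrier (q R)" "Z \<in> carrier (q R)"
  then obtain a s b t c u where
    abc: "a \<in> carrier R" "s \<in> reg R" "b \<in> carrier R" "t \<in> reg R" "c \<in> carrier R" "u \<in> reg R"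
    and XYZ: "X = qclass R a s" "Y = qclass R b t" "Z = qclass R c u"
    by (metis q_cases)
  note carr = abc reg_closed[OF abc(2)] reg_closed[OF abc(4)] reg_closed[OF abc(6)]
  have "(a \<otimes> t \<oplus> b \<otimes> s) \<otimes> c \<otimes> (s \<otimes> u \<otimes> (t \<otimes> u))
      = (a \<otimes> c \<otimes> (t \<otimes> u) \<oplus> b \<otimes> c \<otimes> (s \<otimes> u)) \<otimes> (s \<otimes> t \<otimes> u)"
    using carr by algebra
  then show "(X \<oplus>\<^bsub>q R\<^esub> Y) \<otimes>\<^bsub>q R\<^esub> Z = X \<otimes>\<^bsub>q R\<^esub> Z \<oplus>\<^bsub>q R\<^esub> Y \<otimes>\<^bsub>q R\<^esub> Z"
    using carr by (simp add: XYZ q_simps qadd_qclass qmult_qclass qclass_eq_iff reg_mult)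
qed

lemma qclass_nat_pow:
  assumes "a \<in> carrier R" "s \<in> reg R"
  shows "qclass R a s [^]\<^bsub>q R\<^esub> (n::nat) = qclass R (a [^] n) (s [^] n)"
  by (induction n) (use assms in \<open>simp_all add: q_simps qmult_qclass reg_pow\<close>)

lemma qclass_eq_zero_iff:
  "a \<in> carrier R \<Longrightarrow> s \<in> reg R \<Longrightarrow> qclass R a s = \<zero>\<^bsub>q R\<^esub> \<longleftrightarrow> a = \<zero>"
  by (simp add: q_simps qclass_eq_iff one_reg reg_closed)

lemma qclass_mem_nilradical_iff:
  assumes "a \<in> carrier R" "s \<in> reg R"
  shows "qclass R a s \<in> nilradical (q R) \<longleftrightarrow> a \<in> nilradical R"
  using assms
  by (simp add: nilradical_def qclass_closed qclass_nat_pow qclass_eq_zero_iff reg_pow)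

lemma almost_complemented_q:
  assumes "almost_complemented R"
  shows "almost_complemented (q R)"
proof -
  interpret Q: cring "q R" by (rule q_cring)
  show ?thesis
    unfolding Q.almost_complemented_iff
  proof
    fix X assume "X \<in> carrier (q R)"
    then obtain a s where a: "a \<in> carrier R" and s: "s \<in> reg R" and X: "X = qclass R a s"
      by (metis q_cases)
    obtain b where b: "b \<in> carrier R" and ab: "a \<otimes> b \<in> nilradical R"
      and ab_reg: "\<And>y. y \<in> carrier R \<Longrightarrow> (a \<oplus> b) \<otimes> y \<in> nilradical R \<Longrightarrow> y \<in> nilradical R"
      using assms a unfolding almost_complemented_iff by blast
    note carr = a b reg_closed[OF s]
    show "\<exists>Y\<in>carrier (q R). X \<otimes>\<^bsub>q R\<^esub> Y \<in> nilradical (q R) \<and>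
      (\<forall>Z\<in>carrier (q R). (X \<oplus>\<^bsub>q R\<^esub> Y) \<otimes>\<^bsub>q R\<^esub> Z \<in> nilradical (q R) \<longrightarrow> Z \<in> nilradical (q R))"
    proof (intro bexI conjI ballI impI)
      show "qclass R b s \<in> carrier (q R)"
        using b s by (rule qclass_closed)
      show "X \<otimes>\<^bsub>q R\<^esub> qclass R b s \<in> nilradical (q R)"
        using carr s ab by (simp add: X q_simps qmult_qclass qclass_mem_nilradical_iff reg_mult)
    next
      fix Z assume "Z \<in> carrier (q R)"
        and nil: "(X \<oplus>\<^bsub>q R\<^esub> qclass R b s) \<otimes>\<^bsub>q R\<^esub> Z \<in> nilradical (q R)"
      then obtain y t where y: "y \<in> carrier R" and t: "t \<in> reg R" and Z: "Z = qclass R y t"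
        by (metis q_cases)
      have "s \<otimes> ((a \<oplus> b) \<otimes> y) = (a \<otimes> s \<oplus> b \<otimes> s) \<otimes> y"
        using carr y by algebra
      also have "\<dots> \<in> nilradical R"
        using nil carr s y t
        by (simp add: X Z q_simps qadd_qclass qmult_qclass qclass_mem_nilradical_iff reg_mult)
      finally have "(a \<oplus> b) \<otimes> y \<in> nilradical R"
        by (rule reg_mult_nilradical_cancel[OF s, rotated]) (use carr y in simp)
      then show "Z \<in> nilradical (q R)"
        using ab_reg y t by (simp add: Z qclass_mem_nilradical_iff)
    qed
  qed
qed

lemma almost_complemented_of_q:
  assumes "almost_complemented (q R)"
  shows "almost_complemented R"
  unfolding almost_complemented_iff
proof
  interpret Q: cring "q R" by (rule q_cring)
  fix a assume a: "a \<in> carrier R"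
  then have "qclass R a \<one> \<in> carrier (q R)"
    by (simp add: qclass_closed one_reg)
  then obtain Y where "Y \<in> carrier (q R)" and aY: "qclass R a \<one> \<otimes>\<^bsub>q R\<^esub> Y \<in> nilradical (q R)"
    and aY_reg: "\<And>Z. Z \<in> carrier (q R) \<Longrightarrow>
      (qclass R a \<one> \<oplus>\<^bsub>q R\<^esub> Y) \<otimes>\<^bsub>q R\<^esub> Z \<in> nilradical (q R) \<Longrightarrow> Z \<in> nilradical (q R)"
    using assms unfolding Q.almost_complemented_iff by blast
  then obtain c t where c: "c \<in> carrier R" and t: "t \<in> reg R" and Y: "Y = qclass R c t"
    by (metis q_cases)
  note carr = a c reg_closed[OF t]
  have ac: "a \<otimes> c \<in> nilradical R"
    using aY carr t by (simp add: Y q_simps qmult_qclass qclass_mem_nilradical_iff one_reg reg_mult)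
  show "\<exists>b\<in>carrier R. a \<otimes> b \<in> nilradical R \<and>
    (\<forall>y\<in>carrier R. (a \<oplus> b) \<otimes> y \<in> nilradical R \<longrightarrow> y \<in> nilradical R)"
  proof (intro bexI conjI ballI impI)
    fix y assume y: "y \<in> carrier R" and acy: "(a \<oplus> c) \<otimes> y \<in> nilradical R"
    interpret N: ideal "nilradical R" R by (rule nilradical_ideal)
    have ay: "a \<otimes> y \<in> nilradical R"
      using a c y ac acy by (rule nilradical_mult_of_orthogonal_sum)
    have "c \<otimes> a \<in> nilradical R" "(c \<oplus> a) \<otimes> y \<in> nilradical R"
      using a c ac acy by (simp_all add: m_comm[of c a] a_comm[of c a])
    then have cy: "c \<otimes> y \<in> nilradical R"
      by (rule nilradical_mult_of_orthogonal_sum[OF c a y])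
    have "t \<otimes> (a \<otimes> y) \<oplus> c \<otimes> y \<in> nilradical R"
      using N.a_closed[OF N.I_l_closed[OF ay] cy] carr by simp
    moreover have "t \<otimes> (a \<otimes> y) \<oplus> c \<otimes> y = (a \<otimes> t \<oplus> c) \<otimes> y"
      using carr y by algebra
    ultimately have "(qclass R a \<one> \<oplus>\<^bsub>q R\<^esub> Y) \<otimes>\<^bsub>q R\<^esub> qclass R y \<one> \<in> nilradical (q R)"
      using carr t y
      by (simp add: Y q_simps qadd_qclass qmult_qclass qclass_mem_nilradical_iff one_reg reg_mult)
    then have "qclass R y \<one> \<in> nilradical (q R)"
      by (rule aY_reg[rotated]) (simp add: qclass_closed one_reg y)
    then show "y \<in> nilradical R"
      using y by (simp add: qclass_mem_nilradical_iff one_reg)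
  qed (use c ac in auto)
qed

end

theorem mainTheorem6:
  fixes R :: "('a, 'b) ring_scheme"
  assumes "cring R"
  shows "almost_complemented R \<longleftrightarrow> almost_complemented (q R)"
  using cring.almost_complemented_q[OF assms] cring.almost_complemented_of_q[OF assms] by blast

end
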